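(* For every set of formulas $\Gamma$ and formula $\phi$: if $\Gamma\models_{\mathbf{VC}}\phi$ then $\Gamma\vdash_{\mathbf{VC}}\phi$.
   Context: Formulas: built from propositional variables and the constant $\bot$ using $\lnot$, the binary connectives $\supset,\land,\lor$, and two binary conditional operators $[\phi]\psi$ and $\langle\phi\rangle\psi$ (treated as primitive by tableau rules). $\top$ abbreviates $\lnot\bot$. Segerberg model: $M=\langle U,P,R,V\rangle$ with $U\neq\emptyset$, $P\subseteq\wp(U)$, $R:P\to\wp(U\times U)$, $V:\mathrm{Var}\to P$, such that $\emptyset,U\in P$; $P$ is closed under complement, binary intersection and union; and for $S,T\in P$, $\{x\in U\mid R_S(x)\subseteq T\}\in P$, where $R_S=R(S)$ and $R_S(x)=\{y\mid (x,y)\in R_S\}$. Truth: $M,x\not\models\bot$; $M,x\models p$ iff $x\in V(p)$; Boolean connectives as usual; $M,x\models[\phi]\psi$ iff $M,y\models\psi$ for all $y\in R_\phi(x)$; $M,x\models\langle\phi\rangle\psi$ iff $M,y\models\psi$ for some $y\in R_\phi(x)$; here $\|\phi\|=\{x\mid M,x\models\phi\}$ and $R_\phi=R_{\|\phi\|}$. A $\mathbf{VC}$-model is a Segerberg model such that for all $S,T\in P$ and $x\in U$: (1) $R_S(x)\subseteq S$; (2) $R_S(x)\cap T\neq\emptyset\Rightarrow R_T(x)\neq\emptyset$; (3) $R_U(x)\subseteq\{x\}$; (4) $x\in R_U(x)$; (5) $R_S(x)\cap T\subseteq R_{S\cap T}(x)$; (6) $R_S(x)\cap T\neq\emptyset\Rightarrow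 R_{S\cap T}(x)\subseteq R_S(x)\cap T$. $\Gamma\models_{\mathbf{VC}}\phi$ iff for every $\mathbf{VC}$-model $M$ and world $x$ with $M,x\models\psi$ for all $\psi\in\Gamma$, $M,x\models\phi$. Tableaux: indices are positive integers. Prefixed formulas are $i:\phi$ and $i\,r_\phi\,j$. For a set $\Gamma$ of formulas and a formula $\phi$, a tableau for $(\Gamma,\phi)$ is a finite downward-branching tree labelled by prefixed formulas, each either an assumption ($1:\psi$ with $\psi\in\Gamma$, or $1:\lnot\phi$) or obtained by applying a branch extension rule to prefixed formulas on its branch; non-branching rules append their conclusions, branching rules split the branch into one child per alternative, each alternative appending its listed conclusions. A branch is closed if it contains $i:\chi$ and $i:\lnot\chi$, or $i:\bot$; a tableau is closed if all branches are closed. $\Gamma\vdash_{\mathbf{VC}}\phi$ means there is a closed $\mathbf{VC}$-tableau for $(\Gamma,\phi)$. Basic rules: from $i:\phi\land\psi$ add $i:\phi,i:\psi$; from $i:\lnot(\phi\land\psi)$ branch $i:\lnot\phi\mid i:\lnot\psi$; from $i:\phi\lor\psi$ branch $i:\phi\mid i:\psi$; from $i:\lnot(\phi\lor\psi)$ add $i:\lnot\phi,i:\lnot\psi$; from $i:\phi\supset\psi$ branch $i:\lnot\phi\mid i:\psi$; from $i:\lnot(\phi\supset\psi)$ add $i:\phi,i:\lnot\psi$; from $i:\lnot\lnot\phi$ add $i:\phi$; ($\Box$) from $i:[\phi]\psi$ and $i\,r_\phi\,j$ add $j:\psi$; ($\lnot\Box$) from $i:\lnot[\phi]\psi$ add $i\,r_\phi\,j$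 and $j:\lnot\psi$, $j$ new; ($\Diamond$) from $i:\langle\phi\rangle\psi$ add $i\,r_\phi\,j$ and $j:\psi$, $j$ new; ($\lnot\Diamond$) from $i:\lnot\langle\phi\rangle\psi$ and $i\,r_\phi\,j$ add $j:\lnot\psi$. (cut) for any index $i$ already on the branch and any $\phi$, branch $i:\phi\mid i:\lnot\phi$. (ea) from $i\,r_\phi\,j$ and any $\psi$, branch ($k:\lnot\phi$, $k:\psi$) $\mid$ ($k:\phi$, $k:\lnot\psi$) $\mid$ $i\,r_\psi\,j$, $k$ new. (R1) from $i\,r_\phi\,j$ add $j:\phi$. (R2) from $j:\psi$ and $i\,r_\phi\,j$ add $i\,r_\psi\,k$, $k$ new. (R3) from $i:\phi$, $j:\lnot\phi$, $i\,r_\top\,j$ add $j:\phi$. (R4) for any index $i$ on the branch add $i\,r_\top\,i$. (R5) from $j:\psi$ and $i\,r_\phi\,j$ add $i\,r_{\phi\land\psi}\,j$. (R6) from $j:\psi$, $i\,r_\phi\,j$, $i\,r_{\phi\land\psi}\,k$ add $k:\psi$ and $i\,r_\phi\,k$. $\mathbf{VC}$-tableaux use all of these rules. *)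

theory Defs
  imports Main
begin

text \<open>Propositional variables are indexed by natural numbers.
  Box a b stands for [a]b, Dia a b for <a>b.\<close>

datatype fm = Var nat | Bot | Neg fm | Imp fm fm | Conj fm fm | Disj fm fm
  | Box fm fm | Dia fm fm

definition Top :: fm where "Top = Neg Bot"

record 'w model =
  dom :: "'w set"
  props :: "'w set set"
  rel :: "'w set \<Rightarrow> ('w \<times> 'w) set"
  val :: "nat \<Rightarrow> 'w set"

definition rs :: "'w model \<Rightarrow> 'w set \<Rightarrow> 'w \<Rightarrow> 'w set" where
  "rs M S x = {y. (x, y) \<in> rel M S}"

definition segerberg_model :: "'w model \<Rightarrow> bool" where
  "segerberg_model M \<longleftrightarrow>
     dom M \<noteq> {} \<and>
     (\<forall>S\<in>props M. S \<subseteq> dom M) \<and>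
     (\<forall>S\<in>props M. rel M S \<subseteq> dom M \<times> dom M) \<and>
     (\<forall>p. val M p \<in> props M) \<and>
     {} \<in> props M \<and> dom M \<in> props M \<and>
     (\<forall>S\<in>props M. dom M - S \<in> props M) \<and>
     (\<forall>S\<in>props M. \<forall>T\<in>props M. S \<inter> T \<in> props M \<and> S \<union> T \<in> props M) \<and>
     (\<forall>S\<in>props M. \<forall>T\<in>props M. {x \<in> dom M. rs M S x \<subseteq> T} \<in> props M)"

definition VC_model :: "'w model \<Rightarrow> bool" where
  "VC_model M \<longleftrightarrow> segerberg_model M \<and>
     (\<forall>S\<in>props M. \<forall>T\<in>props M. \<forall>x\<in>dom M.
        rs M S x \<subseteq> S \<and>
        (rs M S x \<inter> T \<noteq> {} \<longrightarrow> rs M T x \<noteq> {}) \<and>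
        rs M (dom M) x \<subseteq> {x} \<and>
        x \<in> rs M (dom M) x \<and>
        rs M S x \<inter> T \<subseteq> rs M (S \<inter> T) x \<and>
        (rs M S x \<inter> T \<noteq> {} \<longrightarrow> rs M (S \<inter> T) x \<subseteq> rs M S x \<inter> T))"

primrec sat :: "'w model \<Rightarrow> fm \<Rightarrow> 'w \<Rightarrow> bool" where
  "sat M (Var p) x = (x \<in> val M p)"
| "sat M Bot x = False"
| "sat M (Neg a) x = (\<not> sat M a x)"
| "sat M (Imp a b) x = (sat M a x \<longrightarrow> sat M b x)"
| "sat M (Conj a b) x = (sat M a x \<and> sat M b x)"
| "sat M (Disj a b) x = (sat M a x \<or> sat M b x)"
| "sat M (Box a b) x = (\<forall>y. (x, y) \<in> rel M {z \<in> dom M. sat M a z} \<longrightarrow> sat M b y)"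
| "sat M (Dia a b) x = (\<exists>y. (x, y) \<in> rel M {z \<in> dom M. sat M a z} \<and> sat M b y)"

definition VC_conseq :: "fm set \<Rightarrow> fm \<Rightarrow> bool" where
  "VC_conseq \<Gamma> \<phi> \<longleftrightarrow>
     (\<forall>(M :: nat model) x. VC_model M \<longrightarrow> x \<in> dom M \<longrightarrow>
        (\<forall>\<psi>\<in>\<Gamma>. sat M \<psi> x) \<longrightarrow> sat M \<phi> x)"

text \<open>Prefixed formulas: PF i a is i:a, PR i a j is i r_a j.\<close>

datatype pf = PF nat fm | PR nat fm nat

primrec idx_of :: "pf \<Rightarrow> nat set" where
  "idx_of (PF i a) = {i}"
| "idx_of (PR i a j) = {i, j}"

definition idx :: "pf set \<Rightarrow> nat set" where
  "idx B = (\<Union>p\<in>B. idx_of p)"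

definition fresh :: "nat \<Rightarrow> pf set \<Rightarrow> bool" where
  "fresh j B \<longleftrightarrow> 0 < j \<and> j \<notin> idx B"

definition branch_closed :: "pf set \<Rightarrow> bool" where
  "branch_closed B \<longleftrightarrow>
     (\<exists>i \<chi>. PF i \<chi> \<in> B \<and> PF i (Neg \<chi>) \<in> B) \<or> (\<exists>i. PF i Bot \<in> B)"

text \<open>A rule application to a branch B yields a list of alternatives,
  each being a list of prefixed formulas appended to the branch.\<close>

inductive vc_rule :: "pf set \<Rightarrow> pf list list \<Rightarrow> bool" where
  r_and: "PF i (Conj a b) \<in> B \<Longrightarrow> vc_rule B [[PF i a, PF i b]]"
| r_nand: "PF i (Neg (Conj a b)) \<in> B \<Longrightarrow> vc_rule B [[PF i (Neg a)], [PF i (Neg b)]]"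
| r_or: "PF i (Disj a b) \<in> B \<Longrightarrow> vc_rule B [[PF i a], [PF i b]]"
| r_nor: "PF i (Neg (Disj a b)) \<in> B \<Longrightarrow> vc_rule B [[PF i (Neg a), PF i (Neg b)]]"
| r_imp: "PF i (Imp a b) \<in> B \<Longrightarrow> vc_rule B [[PF i (Neg a)], [PF i b]]"
| r_nimp: "PF i (Neg (Imp a b)) \<in> B \<Longrightarrow> vc_rule B [[PF i a, PF i (Neg b)]]"
| r_nneg: "PF i (Neg (Neg a)) \<in> B \<Longrightarrow> vc_rule B [[PF i a]]"
| r_box: "PF i (Box a b) \<in> B \<Longrightarrow> PR i a j \<in> B \<Longrightarrow> vc_rule B [[PF j b]]"
| r_nbox: "PF i (Neg (Box a b)) \<in> B \<Longrightarrow> fresh j B \<Longrightarrow>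
           vc_rule B [[PR i a j, PF j (Neg b)]]"
| r_dia: "PF i (Dia a b) \<in> B \<Longrightarrow> fresh j B \<Longrightarrow> vc_rule B [[PR i a j, PF j b]]"
| r_ndia: "PF i (Neg (Dia a b)) \<in> B \<Longrightarrow> PR i a j \<in> B \<Longrightarrow> vc_rule B [[PF j (Neg b)]]"
| r_cut: "i \<in> idx B \<Longrightarrow> vc_rule B [[PF i a], [PF i (Neg a)]]"
| r_ea: "PR i a j \<in> B \<Longrightarrow> fresh k B \<Longrightarrow>
         vc_rule B [[PF k (Neg a), PF k b], [PF k a, PF k (Neg b)], [PR i b j]]"
| r_R1: "PR i a j \<in> B \<Longrightarrow> vc_rule B [[PF j a]]"
| r_R2: "PF j b \<in> B \<Longrightarrow> PR i a j \<in> B \<Longrightarrow> fresh k B \<Longrightarrow> vc_rule B [[PR i b k]]"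
| r_R3: "PF i a \<in> B \<Longrightarrow> PF j (Neg a) \<in> B \<Longrightarrow> PR i Top j \<in> B \<Longrightarrow> vc_rule B [[PF j a]]"
| r_R4: "i \<in> idx B \<Longrightarrow> vc_rule B [[PR i Top i]]"
| r_R5: "PF j b \<in> B \<Longrightarrow> PR i a j \<in> B \<Longrightarrow> vc_rule B [[PR i (Conj a b) j]]"
| r_R6: "PF j b \<in> B \<Longrightarrow> PR i a j \<in> B \<Longrightarrow> PR i (Conj a b) k \<in> B \<Longrightarrow>
         vc_rule B [[PF k b, PR i a k]]"

text \<open>closes G phi B: every branch of some finite tableau for (G, phi) extending
  the branch with label set B can be closed.\<close>

inductive closes :: "fm set \<Rightarrow> fm \<Rightarrow> pf set \<Rightarrow> bool" for \<Gamma> \<phi> where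
  cl_closed: "branch_closed B \<Longrightarrow> closes \<Gamma> \<phi> B"
| cl_hyp: "\<psi> \<in> \<Gamma> \<Longrightarrow> closes \<Gamma> \<phi> (insert (PF 1 \<psi>) B) \<Longrightarrow> closes \<Gamma> \<phi> B"
| cl_neg: "closes \<Gamma> \<phi> (insert (PF 1 (Neg \<phi>)) B) \<Longrightarrow> closes \<Gamma> \<phi> B"
| cl_rule: "vc_rule B alts \<Longrightarrow> (\<forall>alt\<in>set alts. closes \<Gamma> \<phi> (B \<union> set alt)) \<Longrightarrow>
            closes \<Gamma> \<phi> B"

definition VC_derivable :: "fm set \<Rightarrow> fm \<Rightarrow> bool" where
  "VC_derivable \<Gamma> \<phi> \<longleftrightarrow> closes \<Gamma> \<phi> {}"

end

theory Submission
  imports Defs "HOL-Library.Countable"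
begin

text \<open>If no tableau for \<open>(\<Gamma>, \<phi>)\<close> closes, a fair strategy that applies every rule
  (and every assumption) to an open branch, always keeping some alternative open,
  produces in the limit an open branch \<open>H\<close> saturated under all rules: a Hintikka set.
  Its indices, identified when they carry the same formulas, form a canonical model in
  which \<open>i : \<psi> \<in> H\<close> iff \<open>\<psi>\<close> holds at (the class of) \<open>i\<close>; rule (ea) makes the relation
  \<open>R\<^sub>\<psi>\<close> depend only on the truth set of \<open>\<psi>\<close>, and rules R1--R6 give the six VC-conditions.
  World \<open>1\<close> then satisfies \<open>\<Gamma>\<close> and refutes \<open>\<phi>\<close>.\<close>

lemma idx_PF [intro]: "PF i c \<in> B \<Longrightarrow> i \<in> idx B"
  and idx_PR_left [intro]: "PR i a j \<in> B \<Longrightarrow> i \<in> idx B"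
  and idx_PR_right [intro]: "PR i a j \<in> B \<Longrightarrow> j \<in> idx B"
  by (force simp: idx_def)+

section \<open>Hintikka sets and the canonical model\<close>

locale vc_hintikka =
  fixes H :: "pf set"
  assumes no_clash: "PF i c \<in> H \<Longrightarrow> PF i (Neg c) \<in> H \<Longrightarrow> False"
    and no_Bot: "PF i Bot \<notin> H"
    and cut: "i \<in> idx H \<Longrightarrow> PF i c \<in> H \<or> PF i (Neg c) \<in> H"
    and Conj_D: "PF i (Conj a b) \<in> H \<Longrightarrow> PF i a \<in> H \<and> PF i b \<in> H"
    and Neg_Conj_D: "PF i (Neg (Conj a b)) \<in> H \<Longrightarrow> PF i (Neg a) \<in> H \<or> PF i (Neg b) \<in> H"
    and Disj_D: "PF i (Disj a b) \<in> H \<Longrightarrow> PF i a \<in> H \<or> PF i b \<in> H"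
    and Neg_Disj_D: "PF i (Neg (Disj a b)) \<in> H \<Longrightarrow> PF i (Neg a) \<in> H \<and> PF i (Neg b) \<in> H"
    and Imp_D: "PF i (Imp a b) \<in> H \<Longrightarrow> PF i (Neg a) \<in> H \<or> PF i b \<in> H"
    and Neg_Imp_D: "PF i (Neg (Imp a b)) \<in> H \<Longrightarrow> PF i a \<in> H \<and> PF i (Neg b) \<in> H"
    and Neg_Neg_D: "PF i (Neg (Neg a)) \<in> H \<Longrightarrow> PF i a \<in> H"
    and Box_D: "PF i (Box a b) \<in> H \<Longrightarrow> PR i a j \<in> H \<Longrightarrow> PF j b \<in> H"
    and Neg_Box_D: "PF i (Neg (Box a b)) \<in> H \<Longrightarrow> \<exists>j. PR i a j \<in> H \<and> PF j (Neg b) \<in> H"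
    and Dia_D: "PF i (Dia a b) \<in> H \<Longrightarrow> \<exists>j. PR i a j \<in> H \<and> PF j b \<in> H"
    and Neg_Dia_D: "PF i (Neg (Dia a b)) \<in> H \<Longrightarrow> PR i a j \<in> H \<Longrightarrow> PF j (Neg b) \<in> H"
    and ea: "PR i a j \<in> H \<Longrightarrow> \<exists>k. (PF k (Neg a) \<in> H \<and> PF k b \<in> H)
                 \<or> (PF k a \<in> H \<and> PF k (Neg b) \<in> H) \<or> PR i b j \<in> H"
    and R1: "PR i a j \<in> H \<Longrightarrow> PF j a \<in> H"
    and R2: "PF j b \<in> H \<Longrightarrow> PR i a j \<in> H \<Longrightarrow> \<exists>k. PR i b k \<in> H"
    and R3: "PF i a \<in> H \<Longrightarrow> PF j (Neg a) \<in> H \<Longrightarrow> PR i Top j \<in> H \<Longrightarrow> PF j a \<in> H"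
    and R4: "i \<in> idx H \<Longrightarrow> PR i Top i \<in> H"
    and R5: "PF j b \<in> H \<Longrightarrow> PR i a j \<in> H \<Longrightarrow> PR i (Conj a b) j \<in> H"
    and R6: "PF j b \<in> H \<Longrightarrow> PR i a j \<in> H \<Longrightarrow> PR i (Conj a b) k \<in> H
               \<Longrightarrow> PF k b \<in> H \<and> PR i a k \<in> H"
begin

abbreviation holds :: "nat \<Rightarrow> fm \<Rightarrow> bool" where
  "holds i c \<equiv> PF i c \<in> H"

definition same_label :: "nat \<Rightarrow> nat \<Rightarrow> bool" where
  "same_label i j \<longleftrightarrow> (\<forall>c. holds i c \<longleftrightarrow> holds j c)"

text \<open>Condition (3) forces indices with the same formulas to be one world; since
  \<open>VC_conseq\<close> only speaks about models on \<open>nat\<close>, each class is represented by its least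
  index rather than by the class itself.\<close>

definition worlds :: "nat set" where
  "worlds = {i \<in> idx H. \<forall>j\<in>idx H. same_label j i \<longrightarrow> i \<le> j}"

definition truth_set :: "fm \<Rightarrow> nat set" where
  "truth_set a = {x \<in> worlds. holds x a}"

definition box_succ :: "fm \<Rightarrow> nat \<Rightarrow> nat \<Rightarrow> bool" where
  "box_succ a x y \<longleftrightarrow> (\<forall>c. holds x (Box a c) \<longrightarrow> holds y c)"

definition canonical_model :: "nat model" where
  "canonical_model = \<lparr>dom = worlds, props = range truth_set,
     rel = (\<lambda>S. {(x, y). x \<in> worlds \<and> y \<in> worlds \<and>
                  (\<forall>a. S = truth_set a \<longrightarrow> box_succ a x y)}),
     val = (\<lambda>p. truth_set (Var p))\<rparr>"

lemma worlds_idx: "x \<in> worlds \<Longrightarrow> x \<in> idx H"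
  by (simp add: worlds_def)

lemma ex_world_same_label:
  assumes "i \<in> idx H"
  obtains x where "x \<in> worlds" "same_label x i"
proof -
  let ?x = "LEAST j. j \<in> idx H \<and> same_label j i"
  have "\<exists>j. j \<in> idx H \<and> same_label j i"
    using assms by (auto simp: same_label_def)
  then have x: "?x \<in> idx H \<and> same_label ?x i"
    by (rule LeastI_ex)
  then have "\<forall>j\<in>idx H. same_label j ?x \<longrightarrow> ?x \<le> j"
    by (auto intro!: Least_le simp: same_label_def)
  with x that show thesis
    by (auto simp: worlds_def)
qed

lemma worlds_same_label_eq:
  assumes "x \<in> worlds" "y \<in> worlds" "same_label x y"
  shows "x = y"
proof -
  have "same_label y x"
    using assms(3) by (auto simp: same_label_def)
  with assms show ?thesis
    by (force simp: worlds_def)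
qed

lemma holds_Neg_iff: "x \<in> idx H \<Longrightarrow> holds x (Neg c) \<longleftrightarrow> \<not> holds x c"
  using cut no_clash by blast

lemma holds_Conj_iff: "x \<in> idx H \<Longrightarrow> holds x (Conj a b) \<longleftrightarrow> holds x a \<and> holds x b"
  using cut[of x "Conj a b"] Conj_D Neg_Conj_D no_clash by blast

lemma holds_Disj_iff: "x \<in> idx H \<Longrightarrow> holds x (Disj a b) \<longleftrightarrow> holds x a \<or> holds x b"
  using cut[of x "Disj a b"] Disj_D Neg_Disj_D no_clash by blast

lemma holds_Imp_iff: "x \<in> idx H \<Longrightarrow> holds x (Imp a b) \<longleftrightarrow> (holds x a \<longrightarrow> holds x b)"
  using cut[of x "Imp a b"] Imp_D Neg_Imp_D no_clash by blast

lemma holds_Top: "x \<in> idx H \<Longrightarrow> holds x Top"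
  using cut[of x Bot] no_Bot by (auto simp: Top_def)

lemma box_succ_world:
  assumes "PR x a j \<in> H" and "same_label y j"
  shows "box_succ a x y"
  using assms Box_D by (auto simp: box_succ_def same_label_def)

lemma holds_Box_iff:
  assumes "x \<in> idx H"
  shows "holds x (Box a b) \<longleftrightarrow> (\<forall>y\<in>worlds. box_succ a x y \<longrightarrow> holds y b)"
proof
  assume all: "\<forall>y\<in>worlds. box_succ a x y \<longrightarrow> holds y b"
  show "holds x (Box a b)"
  proof (rule ccontr)
    assume "\<not> holds x (Box a b)"
    then obtain j where j: "PR x a j \<in> H" "holds j (Neg b)"
      using cut assms Neg_Box_D by blast
    obtain y where y: "y \<in> worlds" "same_label y j"
      using ex_world_same_label j(1) by blast
    then have "holds y b"
      using all box_succ_world[OF j(1)] by blast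
    with y j show False
      using no_clash by (auto simp: same_label_def)
  qed
qed (auto simp: box_succ_def)

lemma holds_Dia_iff:
  assumes "x \<in> idx H"
  shows "holds x (Dia a b) \<longleftrightarrow> (\<exists>y\<in>worlds. box_succ a x y \<and> holds y b)"
proof
  assume "holds x (Dia a b)"
  then obtain j where j: "PR x a j \<in> H" "holds j b"
    using Dia_D by blast
  obtain y where y: "y \<in> worlds" "same_label y j"
    using ex_world_same_label j(1) by blast
  then show "\<exists>y\<in>worlds. box_succ a x y \<and> holds y b"
    using box_succ_world[OF j(1) y(2)] j(2) by (auto simp: same_label_def)
next
  assume "\<exists>y\<in>worlds. box_succ a x y \<and> holds y b"
  then obtain y where y: "box_succ a x y" "holds y b"
    by blast
  show "holds x (Dia a b)"
  proof (rule ccontr)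
    assume "\<not> holds x (Dia a b)"
    then have nd: "holds x (Neg (Dia a b))"
      using cut assms by blast
    have "holds x (Box a (Neg b))"
    proof (rule ccontr)
      assume "\<not> holds x (Box a (Neg b))"
      then obtain j where "PR x a j \<in> H" "holds j (Neg (Neg b))"
        using cut assms Neg_Box_D by blast
      then show False
        using Neg_Neg_D Neg_Dia_D[OF nd] no_clash by blast
    qed
    with y show False
      using no_clash by (auto simp: box_succ_def)
  qed
qed

lemma holds_Box_truth_set_cong:
  assumes "x \<in> idx H" "truth_set a = truth_set a'" "holds x (Box a c)"
  shows "holds x (Box a' c)"
proof (rule ccontr)
  assume "\<not> holds x (Box a' c)"
  then obtain j where j: "PR x a' j \<in> H" "holds j (Neg c)"
    using cut assms(1) Neg_Box_D by blast
  obtain k where k: "(holds k (Neg a') \<and> holds k a) \<or> (holds k a' \<and> holds k (Neg a))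
      \<or> PR x a j \<in> H"
    using ea[OF j(1), of a] by blast
  show False
  proof (cases "PR x a j \<in> H")
    case True
    then show False
      using Box_D assms(3) j(2) no_clash by blast
  next
    case False
    with k have "k \<in> idx H"
      by blast
    then obtain y where y: "y \<in> worlds" "same_label y k"
      using ex_world_same_label by blast
    have "y \<in> truth_set a \<longleftrightarrow> y \<in> truth_set a'"
      using assms(2) by simp
    with False k y show False
      using no_clash by (auto simp: truth_set_def same_label_def)
  qed
qed

lemma rs_canonical_truth_set:
  assumes x: "x \<in> worlds"
  shows "rs canonical_model (truth_set a) x = {y \<in> worlds. box_succ a x y}"
proof
  show "rs canonical_model (truth_set a) x \<subseteq> {y \<in> worlds. box_succ a x y}"
    by (auto simp: rs_def canonical_model_def)
  show "{y \<in> worlds. box_succ a x y} \<subseteq> rs canonical_model (truth_set a) x"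
  proof clarify
    fix y assume y: "y \<in> worlds" "box_succ a x y"
    have "box_succ a' x y" if "truth_set a = truth_set a'" for a'
      using y(2) holds_Box_truth_set_cong[OF worlds_idx[OF x] that[symmetric]] by (simp add: box_succ_def)
    with x y(1) show "y \<in> rs canonical_model (truth_set a) x"
      by (simp add: rs_def canonical_model_def)
  qed
qed

lemma truth_lemma: "x \<in> worlds \<Longrightarrow> sat canonical_model c x \<longleftrightarrow> holds x c"
proof (induction c arbitrary: x)
  case (Box a b)
  have "{z \<in> dom canonical_model. sat canonical_model a z} = truth_set a"
    using Box.IH(1) by (auto simp: canonical_model_def truth_set_def)
  then have "sat canonical_model (Box a b) x \<longleftrightarrow>
      (\<forall>y\<in>rs canonical_model (truth_set a) x. sat canonical_model b y)"
    by (simp add: rs_def)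
  also have "\<dots> \<longleftrightarrow> holds x (Box a b)"
    using rs_canonical_truth_set[OF Box.prems] Box.IH(2) holds_Box_iff worlds_idx[OF Box.prems]
    by auto
  finally show ?case .
next
  case (Dia a b)
  have "{z \<in> dom canonical_model. sat canonical_model a z} = truth_set a"
    using Dia.IH(1) by (auto simp: canonical_model_def truth_set_def)
  then have "sat canonical_model (Dia a b) x \<longleftrightarrow>
      (\<exists>y\<in>rs canonical_model (truth_set a) x. sat canonical_model b y)"
    by (simp add: rs_def)
  also have "\<dots> \<longleftrightarrow> holds x (Dia a b)"
    using rs_canonical_truth_set[OF Dia.prems] Dia.IH(2) holds_Dia_iff worlds_idx[OF Dia.prems]
    by auto
  finally show ?case .
qed (use no_Bot holds_Neg_iff holds_Imp_iff holds_Conj_iff holds_Disj_iff worlds_idx in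
      \<open>auto simp: canonical_model_def truth_set_def\<close>)

lemma truth_set_Neg: "worlds - truth_set a = truth_set (Neg a)"
  and truth_set_Conj: "truth_set a \<inter> truth_set b = truth_set (Conj a b)"
  and truth_set_Disj: "truth_set a \<union> truth_set b = truth_set (Disj a b)"
  and truth_set_Bot: "truth_set Bot = {}"
  and truth_set_Top: "truth_set Top = worlds"
  using holds_Neg_iff holds_Conj_iff holds_Disj_iff no_Bot holds_Top worlds_idx
  by (auto simp: truth_set_def)

lemma truth_set_Box:
  "{x \<in> worlds. rs canonical_model (truth_set a) x \<subseteq> truth_set b} = truth_set (Box a b)"
  using rs_canonical_truth_set holds_Box_iff worlds_idx by (auto simp: truth_set_def)

lemma segerberg_canonical_model:
  assumes "worlds \<noteq> {}"
  shows "segerberg_model canonical_model"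
  unfolding segerberg_model_def
proof (intro conjI ballI allI)
  show "{} \<in> props canonical_model" "dom canonical_model \<in> props canonical_model"
    using truth_set_Bot truth_set_Top by (simp_all add: canonical_model_def) (metis rangeI)+
  fix S T assume "S \<in> props canonical_model" "T \<in> props canonical_model"
  then obtain a b where ab: "S = truth_set a" "T = truth_set b"
    by (auto simp: canonical_model_def)
  show "dom canonical_model - S \<in> props canonical_model"
    using ab truth_set_Neg by (auto simp: canonical_model_def)
  show "S \<inter> T \<in> props canonical_model" "S \<union> T \<in> props canonical_model"
    using ab truth_set_Conj truth_set_Disj by (auto simp: canonical_model_def)
  show "{x \<in> dom canonical_model. rs canonical_model S x \<subseteq> T} \<in> props canonical_model"
    using ab truth_set_Box by (auto simp: canonical_model_def)
qed (use assms in \<open>auto simp: canonical_model_def truth_set_def\<close>)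

lemma box_succ_holds:
  assumes "x \<in> worlds" "box_succ a x y"
  shows "holds y a"
proof -
  have "holds x (Box a a)"
  proof (rule ccontr)
    assume "\<not> holds x (Box a a)"
    then obtain j where "PR x a j \<in> H" "holds j (Neg a)"
      using cut worlds_idx[OF assms(1)] Neg_Box_D by blast
    then show False
      using R1 no_clash by blast
  qed
  with assms(2) show ?thesis
    by (simp add: box_succ_def)
qed

lemma box_succ_exists:
  assumes x: "x \<in> worlds" and y: "y \<in> worlds" "box_succ a x y" "holds y b"
  shows "\<exists>k\<in>worlds. box_succ b x k"
proof -
  have xI: "x \<in> idx H"
    using x worlds_idx by blast
  have "holds x (Dia b Top)"
  proof (rule ccontr)
    assume "\<not> holds x (Dia b Top)"
    then have nd: "holds x (Neg (Dia b Top))"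
      using cut xI by blast
    have "holds x (Dia a b)"
      using holds_Dia_iff[OF xI] y by blast
    then obtain j where "PR x a j \<in> H" "holds j b"
      using Dia_D by blast
    then obtain k where "PR x b k \<in> H"
      using R2 by blast
    then have "holds k (Neg Top)"
      using Neg_Dia_D[OF nd] by blast
    then show False
      using Neg_Neg_D no_Bot by (auto simp: Top_def)
  qed
  then show ?thesis
    using holds_Dia_iff[OF xI] by blast
qed

lemma box_succ_Top_eq:
  assumes x: "x \<in> worlds" and y: "y \<in> worlds" "box_succ Top x y"
  shows "y = x"
proof -
  have Box_Top: "holds x (Box Top c)" if "holds x c" for c
  proof (rule ccontr)
    assume "\<not> holds x (Box Top c)"
    then obtain j where "PR x Top j \<in> H" "holds j (Neg c)"
      using cut worlds_idx[OF x] Neg_Box_D by blast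
    then show False
      using R3[OF that] no_clash by blast
  qed
  have "holds y c \<longleftrightarrow> holds x c" for c
    using Box_Top[of c] Box_Top[of "Neg c"] y(2) no_clash holds_Neg_iff[OF worlds_idx[OF x]]
    by (auto simp: box_succ_def)
  then show ?thesis
    using worlds_same_label_eq[OF y(1) x] by (simp add: same_label_def)
qed

lemma box_succ_Top_refl: "x \<in> worlds \<Longrightarrow> box_succ Top x x"
  using R4 Box_D worlds_idx by (auto simp: box_succ_def)

lemma box_succ_Conj:
  assumes x: "x \<in> worlds" and y: "y \<in> worlds" "box_succ a x y" "holds y b"
  shows "box_succ (Conj a b) x y"
  unfolding box_succ_def
proof (intro allI impI)
  fix c assume Box_c: "holds x (Box (Conj a b) c)"
  show "holds y c"
  proof (rule ccontr)
    assume "\<not> holds y c"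
    with y have "holds y (Conj b (Neg c))"
      using holds_Conj_iff holds_Neg_iff worlds_idx by blast
    with y(1,2) have "holds x (Dia a (Conj b (Neg c)))"
      using holds_Dia_iff[OF worlds_idx[OF x]] by blast
    then obtain j where "PR x a j \<in> H" "holds j b" "holds j (Neg c)"
      using Dia_D Conj_D by blast
    then show False
      using R5 Box_D[OF Box_c] no_clash by blast
  qed
qed

lemma box_succ_Conj_D:
  assumes x: "x \<in> worlds" and y: "y \<in> worlds" "box_succ a x y" "holds y b"
    and k: "k \<in> worlds" "box_succ (Conj a b) x k"
  shows "holds k b \<and> box_succ a x k"
proof
  show "holds k b"
    using box_succ_holds[OF x k(2)] Conj_D by blast
  show "box_succ a x k"
    unfolding box_succ_def
  proof (intro allI impI)
    fix c assume Box_c: "holds x (Box a c)"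
    show "holds k c"
    proof (rule ccontr)
      assume "\<not> holds k c"
      with k have "holds x (Dia (Conj a b) (Neg c))"
        using holds_Dia_iff[OF worlds_idx[OF x]] holds_Neg_iff[OF worlds_idx[OF k(1)]] by blast
      then obtain m where m: "PR x (Conj a b) m \<in> H" "holds m (Neg c)"
        using Dia_D by blast
      have "holds x (Dia a b)"
        using holds_Dia_iff[OF worlds_idx[OF x]] y by blast
      then obtain j where "PR x a j \<in> H" "holds j b"
        using Dia_D by blast
      with m have "PR x a m \<in> H"
        using R6 by blast
      with m(2) show False
        using Box_D[OF Box_c] no_clash by blast
    qed
  qed
qed

theorem VC_canonical_model:
  assumes "worlds \<noteq> {}"
  shows "VC_model canonical_model"
  unfolding VC_model_def
proof (intro conjI ballI segerberg_canonical_model[OF assms])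
  fix S T x
  assume "S \<in> props canonical_model" "T \<in> props canonical_model" "x \<in> dom canonical_model"
  then obtain a b where ab: "S = truth_set a" "T = truth_set b" and x: "x \<in> worlds"
    by (auto simp: canonical_model_def)
  have dom: "dom canonical_model = truth_set Top"
    using truth_set_Top by (simp add: canonical_model_def)
  have T: "T = {y \<in> worlds. holds y b}"
    using ab by (simp add: truth_set_def)
  note rs = rs_canonical_truth_set[OF x]
  have rS: "rs canonical_model S x = {y \<in> worlds. box_succ a x y}"
    and rT: "rs canonical_model T x = {y \<in> worlds. box_succ b x y}"
    and rD: "rs canonical_model (dom canonical_model) x = {y \<in> worlds. box_succ Top x y}"
    and rST: "rs canonical_model (S \<inter> T) x = {y \<in> worlds. box_succ (Conj a b) x y}"
    using rs ab dom truth_set_Conj by simp_all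
  show "rs canonical_model S x \<subseteq> S"
    using rS ab box_succ_holds[OF x] by (auto simp: truth_set_def)
  show "rs canonical_model S x \<inter> T \<noteq> {} \<longrightarrow> rs canonical_model T x \<noteq> {}"
    using rS rT T box_succ_exists[OF x] by blast
  show "rs canonical_model (dom canonical_model) x \<subseteq> {x}"
    using rD box_succ_Top_eq[OF x] by blast
  show "x \<in> rs canonical_model (dom canonical_model) x"
    using rD box_succ_Top_refl x by blast
  show "rs canonical_model S x \<inter> T \<subseteq> rs canonical_model (S \<inter> T) x"
    using rS rST T box_succ_Conj[OF x] by blast
  show "rs canonical_model S x \<inter> T \<noteq> {} \<longrightarrow>
      rs canonical_model (S \<inter> T) x \<subseteq> rs canonical_model S x \<inter> T"
    using rS rST T box_succ_Conj_D[OF x] by blast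
qed

lemma index_satisfiable:
  assumes "i \<in> idx H"
  obtains x where "VC_model canonical_model" "x \<in> dom canonical_model"
    "\<And>c. holds i c \<Longrightarrow> sat canonical_model c x"
proof -
  obtain x where x: "x \<in> worlds" "same_label x i"
    using ex_world_same_label[OF assms] .
  then have "VC_model canonical_model"
    using VC_canonical_model by blast
  with x that show thesis
    using truth_lemma by (auto simp: canonical_model_def same_label_def)
qed

end

section \<open>A fair construction of an open saturated branch\<close>

lemma finite_idx: "finite B \<Longrightarrow> finite (idx B)"
proof -
  have "finite (idx_of p)" for p
    by (cases p) auto
  then show "finite B \<Longrightarrow> finite (idx B)"
    by (simp add: idx_def)
qed

lemma idx_mono: "A \<subseteq> B \<Longrightarrow> idx A \<subseteq> idx B"
  by (auto simp: idx_def)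

lemma idx_singleton_witness:
  assumes "i \<in> idx B"
  obtains p where "p \<in> B" "i \<in> idx {p}"
  using assms by (auto simp: idx_def)

definition new_index :: "pf set \<Rightarrow> nat" where
  "new_index B = Suc (Max (insert 0 (idx B)))"

lemma fresh_new_index:
  assumes "finite B"
  shows "fresh (new_index B) B"
proof -
  have "i \<le> Max (insert 0 (idx B))" if "i \<in> idx B" for i
    using finite_idx[OF assms] that by simp
  then show ?thesis
    unfolding fresh_def new_index_def by (meson Suc_n_not_le_n zero_less_Suc)
qed

instance fm :: countable
  by countable_datatype

instance pf :: countable
  by countable_datatype

text \<open>A task is a rule application with all parameters fixed except, for the rules
  introducing a fresh index, that index: it is chosen as \<open>new_index\<close> of the branch the
  task is executed on.\<close>

datatype task =
    Apply_rule "pf list list"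
  | Expand_Neg_Box nat fm fm
  | Expand_Dia nat fm fm
  | Expand_ea nat fm nat fm
  | Expand_R2 nat fm nat fm
  | Assume fm
  | Assume_Neg_goal

instance task :: countable
  by countable_datatype

fun task_alts :: "fm \<Rightarrow> pf set \<Rightarrow> task \<Rightarrow> pf list list" where
  "task_alts \<phi> B (Apply_rule alts) = alts"
| "task_alts \<phi> B (Expand_Neg_Box i a b) = [[PR i a (new_index B), PF (new_index B) (Neg b)]]"
| "task_alts \<phi> B (Expand_Dia i a b) = [[PR i a (new_index B), PF (new_index B) b]]"
| "task_alts \<phi> B (Expand_ea i a j b) =
     [[PF (new_index B) (Neg a), PF (new_index B) b], [PF (new_index B) a, PF (new_index B) (Neg b)],
      [PR i b j]]"
| "task_alts \<phi> B (Expand_R2 i a j b) = [[PR i b (new_index B)]]"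
| "task_alts \<phi> B (Assume \<psi>) = [[PF 1 \<psi>]]"
| "task_alts \<phi> B Assume_Neg_goal = [[PF 1 (Neg \<phi>)]]"

fun task_enabled :: "fm set \<Rightarrow> pf set \<Rightarrow> task \<Rightarrow> bool" where
  "task_enabled \<Gamma> B (Apply_rule alts) = vc_rule B alts"
| "task_enabled \<Gamma> B (Expand_Neg_Box i a b) = (PF i (Neg (Box a b)) \<in> B)"
| "task_enabled \<Gamma> B (Expand_Dia i a b) = (PF i (Dia a b) \<in> B)"
| "task_enabled \<Gamma> B (Expand_ea i a j b) = (PR i a j \<in> B)"
| "task_enabled \<Gamma> B (Expand_R2 i a j b) = (PF j b \<in> B \<and> PR i a j \<in> B)"
| "task_enabled \<Gamma> B (Assume \<psi>) = (\<psi> \<in> \<Gamma>)"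
| "task_enabled \<Gamma> B Assume_Neg_goal = True"

lemma task_keeps_branch_open:
  assumes "finite B" "\<not> closes \<Gamma> \<phi> B" "task_enabled \<Gamma> B t"
  shows "\<exists>alt\<in>set (task_alts \<phi> B t). \<not> closes \<Gamma> \<phi> (B \<union> set alt)"
proof (rule ccontr)
  assume "\<not> ?thesis"
  then have all: "\<forall>alt\<in>set (task_alts \<phi> B t). closes \<Gamma> \<phi> (B \<union> set alt)"
    by blast
  have fr: "fresh (new_index B) B"
    using fresh_new_index[OF assms(1)] .
  show False
  proof (cases t)
    case Apply_rule
    then show False using assms(2,3) all closes.cl_rule by auto
  next
    case Expand_Neg_Box
    then show False using assms(2,3) all closes.cl_rule vc_rule.r_nbox[OF _ fr] by fastforce
  next
    case Expand_Dia
    then show False using assms(2,3) all closes.cl_rule vc_rule.r_dia[OF _ fr] by fastforce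
  next
    case Expand_ea
    then show False using assms(2,3) all closes.cl_rule vc_rule.r_ea[OF _ fr] by fastforce
  next
    case Expand_R2
    then show False using assms(2,3) all closes.cl_rule vc_rule.r_R2[OF _ _ fr] by fastforce
  next
    case Assume
    then show False using assms(2,3) all closes.cl_hyp by auto
  next
    case Assume_Neg_goal
    then show False using assms(2) all closes.cl_neg by auto
  qed
qed

definition run_task :: "fm set \<Rightarrow> fm \<Rightarrow> pf set \<Rightarrow> task \<Rightarrow> pf set" where
  "run_task \<Gamma> \<phi> B t =
    (if task_enabled \<Gamma> B t \<and> (\<exists>alt\<in>set (task_alts \<phi> B t). \<not> closes \<Gamma> \<phi> (B \<union> set alt))
     then B \<union> set (SOME alt. alt \<in> set (task_alts \<phi> B t) \<and> \<not> closes \<Gamma> \<phi> (B \<union> set alt))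
     else B)"

text \<open>Stage \<open>n\<close> runs the task numbered \<open>fst (prod_decode n)\<close>, so every task is run
  at infinitely many stages.\<close>

primrec open_chain :: "fm set \<Rightarrow> fm \<Rightarrow> nat \<Rightarrow> pf set" where
  "open_chain \<Gamma> \<phi> 0 = {}"
| "open_chain \<Gamma> \<phi> (Suc n) = run_task \<Gamma> \<phi> (open_chain \<Gamma> \<phi> n) (from_nat (fst (prod_decode n)))"

definition open_limit :: "fm set \<Rightarrow> fm \<Rightarrow> pf set" where
  "open_limit \<Gamma> \<phi> = (\<Union>n. open_chain \<Gamma> \<phi> n)"

lemma open_chain_finite_open:
  assumes "\<not> closes \<Gamma> \<phi> {}"
  shows "finite (open_chain \<Gamma> \<phi> n) \<and> \<not> closes \<Gamma> \<phi> (open_chain \<Gamma> \<phi> n)"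
proof (induction n)
  case (Suc n)
  let ?B = "open_chain \<Gamma> \<phi> n" and ?t = "from_nat (fst (prod_decode n)) :: task"
  let ?P = "\<lambda>alt. alt \<in> set (task_alts \<phi> ?B ?t) \<and> \<not> closes \<Gamma> \<phi> (?B \<union> set alt)"
  show ?case
    using Suc someI_ex[of ?P] by (auto simp: run_task_def simp del: task_alts.simps)
qed (use assms in simp)

lemma mono_open_chain: "mono (open_chain \<Gamma> \<phi>)"
  unfolding mono_iff_le_Suc by (simp add: run_task_def)

lemma finite_subset_open_chain:
  assumes "finite F" "F \<subseteq> open_limit \<Gamma> \<phi>"
  obtains n where "\<forall>m\<ge>n. F \<subseteq> open_chain \<Gamma> \<phi> m"
proof -
  have "\<exists>n. F \<subseteq> open_chain \<Gamma> \<phi> n"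
    using assms
  proof (induction F rule: finite_induct)
    case (insert p F)
    then obtain n m where "F \<subseteq> open_chain \<Gamma> \<phi> n" "p \<in> open_chain \<Gamma> \<phi> m"
      by (auto simp: open_limit_def)
    moreover have "open_chain \<Gamma> \<phi> n \<subseteq> open_chain \<Gamma> \<phi> (max n m)"
      "open_chain \<Gamma> \<phi> m \<subseteq> open_chain \<Gamma> \<phi> (max n m)"
      using mono_open_chain[of \<Gamma> \<phi>] by (simp_all add: monoD)
    ultimately have "insert p F \<subseteq> open_chain \<Gamma> \<phi> (max n m)"
      by blast
    then show ?case ..
  qed simp
  with that show thesis
    using monoD[OF mono_open_chain[of \<Gamma> \<phi>]] by blast
qed

lemma open_limit_runs_task:
  assumes nc: "\<not> closes \<Gamma> \<phi> {}" and F: "finite F" "F \<subseteq> open_limit \<Gamma> \<phi>"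
    and enabled: "\<And>B. F \<subseteq> B \<Longrightarrow> task_enabled \<Gamma> B t"
  shows "\<exists>B. \<exists>alt\<in>set (task_alts \<phi> B t). set alt \<subseteq> open_limit \<Gamma> \<phi>"
proof -
  obtain n where n: "\<forall>m\<ge>n. F \<subseteq> open_chain \<Gamma> \<phi> m"
    using finite_subset_open_chain[OF F] .
  define m where "m = prod_encode (to_nat t, n)"
  let ?B = "open_chain \<Gamma> \<phi> m"
  let ?P = "\<lambda>alt. alt \<in> set (task_alts \<phi> ?B t) \<and> \<not> closes \<Gamma> \<phi> (?B \<union> set alt)"
  have "n \<le> m"
    unfolding m_def by (rule le_prod_encode_2)
  then have "task_enabled \<Gamma> ?B t"
    using n enabled by blast
  moreover from this have "Ex ?P"
    using task_keeps_branch_open open_chain_finite_open[OF nc] by blast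
  ultimately have runs: "task_enabled \<Gamma> ?B t \<and> (\<exists>alt\<in>set (task_alts \<phi> ?B t).
      \<not> closes \<Gamma> \<phi> (?B \<union> set alt))"
    by blast
  have "open_chain \<Gamma> \<phi> (Suc m) = run_task \<Gamma> \<phi> ?B t"
    by (simp add: m_def)
  also have "\<dots> = ?B \<union> set (Eps ?P)"
    unfolding run_task_def using runs by (rule if_P)
  moreover have "Eps ?P \<in> set (task_alts \<phi> ?B t)"
    using someI_ex[OF \<open>Ex ?P\<close>] by blast
  ultimately show ?thesis
    unfolding open_limit_def by blast
qed

lemma open_limit_rule_closed:
  assumes "\<not> closes \<Gamma> \<phi> {}" "finite F" "F \<subseteq> open_limit \<Gamma> \<phi>"
    and "\<And>B. F \<subseteq> B \<Longrightarrow> vc_rule B alts"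
  shows "\<exists>alt\<in>set alts. set alt \<subseteq> open_limit \<Gamma> \<phi>"
proof -
  have "\<exists>B. \<exists>alt\<in>set (task_alts \<phi> B (Apply_rule alts)). set alt \<subseteq> open_limit \<Gamma> \<phi>"
    by (rule open_limit_runs_task[OF assms(1-3)]) (simp add: assms(4))
  then show ?thesis
    by simp
qed

lemma open_limit_not_branch_closed:
  assumes "\<not> closes \<Gamma> \<phi> {}" "finite F" "F \<subseteq> open_limit \<Gamma> \<phi>"
  shows "\<not> branch_closed F"
proof
  assume "branch_closed F"
  obtain n where "F \<subseteq> open_chain \<Gamma> \<phi> n"
    using finite_subset_open_chain[OF assms(2,3)] order_refl by metis
  with \<open>branch_closed F\<close> have "branch_closed (open_chain \<Gamma> \<phi> n)"
    unfolding branch_closed_def by blast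
  then show False
    using open_chain_finite_open[OF assms(1)] closes.cl_closed by blast
qed

lemma vc_hintikka_open_limit:
  assumes nc: "\<not> closes \<Gamma> \<phi> {}"
  shows "vc_hintikka (open_limit \<Gamma> \<phi>)"
proof -
  let ?H = "open_limit \<Gamma> \<phi>"
  note rule = open_limit_rule_closed[OF nc]
  note task = open_limit_runs_task[OF nc]
  show ?thesis
  proof
    fix i c assume "PF i c \<in> ?H" "PF i (Neg c) \<in> ?H"
    then show False
      using open_limit_not_branch_closed[OF nc, of "{PF i c, PF i (Neg c)}"]
      by (auto simp: branch_closed_def)
  next
    fix i show "PF i Bot \<notin> ?H"
      using open_limit_not_branch_closed[OF nc, of "{PF i Bot}"] by (auto simp: branch_closed_def)
  next
    fix i c assume "i \<in> idx ?H"
    then obtain p where "p \<in> ?H" "i \<in> idx {p}"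
      by (rule idx_singleton_witness)
    moreover have "vc_rule B [[PF i c], [PF i (Neg c)]]" if "p \<in> B" for B
      using idx_mono[of "{p}" B] that \<open>i \<in> idx {p}\<close> vc_rule.r_cut by blast
    ultimately show "PF i c \<in> ?H \<or> PF i (Neg c) \<in> ?H"
      using rule[of "{p}" "[[PF i c], [PF i (Neg c)]]"] by simp
  next
    fix i a b assume "PF i (Conj a b) \<in> ?H"
    with rule[of "{PF i (Conj a b)}" "[[PF i a, PF i b]]"] show "PF i a \<in> ?H \<and> PF i b \<in> ?H"
      by (auto intro: vc_rule.r_and)
  next
    fix i a b assume "PF i (Neg (Conj a b)) \<in> ?H"
    with rule[of "{PF i (Neg (Conj a b))}" "[[PF i (Neg a)], [PF i (Neg b)]]"] show "PF i (Neg a) \<in> ?H \<or> PF i (Neg b) \<in> ?H"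
      by (auto intro: vc_rule.r_nand)
  next
    fix i a b assume "PF i (Disj a b) \<in> ?H"
    with rule[of "{PF i (Disj a b)}" "[[PF i a], [PF i b]]"] show "PF i a \<in> ?H \<or> PF i b \<in> ?H"
      by (auto intro: vc_rule.r_or)
  next
    fix i a b assume "PF i (Neg (Disj a b)) \<in> ?H"
    with rule[of "{PF i (Neg (Disj a b))}" "[[PF i (Neg a), PF i (Neg b)]]"] show "PF i (Neg a) \<in> ?H \<and> PF i (Neg b) \<in> ?H"
      by (auto intro: vc_rule.r_nor)
  next
    fix i a b assume "PF i (Imp a b) \<in> ?H"
    with rule[of "{PF i (Imp a b)}" "[[PF i (Neg a)], [PF i b]]"] show "PF i (Neg a) \<in> ?H \<or> PF i b \<in> ?H"
      by (auto intro: vc_rule.r_imp)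
  next
    fix i a b assume "PF i (Neg (Imp a b)) \<in> ?H"
    with rule[of "{PF i (Neg (Imp a b))}" "[[PF i a, PF i (Neg b)]]"] show "PF i a \<in> ?H \<and> PF i (Neg b) \<in> ?H"
      by (auto intro: vc_rule.r_nimp)
  next
    fix i a assume "PF i (Neg (Neg a)) \<in> ?H"
    with rule[of "{PF i (Neg (Neg a))}" "[[PF i a]]"] show "PF i a \<in> ?H"
      by (auto intro: vc_rule.r_nneg)
  next
    fix i a b j assume "PF i (Box a b) \<in> ?H" "PR i a j \<in> ?H"
    with rule[of "{PF i (Box a b), PR i a j}" "[[PF j b]]"] show "PF j b \<in> ?H"
      by (auto intro: vc_rule.r_box)
  next
    fix i a b assume "PF i (Neg (Box a b)) \<in> ?H"
    with task[of "{PF i (Neg (Box a b))}" "Expand_Neg_Box i a b"] show "\<exists>j. PR i a j \<in> ?H \<and> PF j (Neg b) \<in> ?H"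
      by auto
  next
    fix i a b assume "PF i (Dia a b) \<in> ?H"
    with task[of "{PF i (Dia a b)}" "Expand_Dia i a b"] show "\<exists>j. PR i a j \<in> ?H \<and> PF j b \<in> ?H"
      by auto
  next
    fix i a b j assume "PF i (Neg (Dia a b)) \<in> ?H" "PR i a j \<in> ?H"
    with rule[of "{PF i (Neg (Dia a b)), PR i a j}" "[[PF j (Neg b)]]"] show "PF j (Neg b) \<in> ?H"
      by (auto intro: vc_rule.r_ndia)
  next
    fix i a j b assume "PR i a j \<in> ?H"
    with task[of "{PR i a j}" "Expand_ea i a j b"] show "\<exists>k. (PF k (Neg a) \<in> ?H \<and> PF k b \<in> ?H)
        \<or> (PF k a \<in> ?H \<and> PF k (Neg b) \<in> ?H) \<or> PR i b j \<in> ?H"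
      by auto
  next
    fix i a j assume "PR i a j \<in> ?H"
    with rule[of "{PR i a j}" "[[PF j a]]"] show "PF j a \<in> ?H"
      by (auto intro: vc_rule.r_R1)
  next
    fix j b i a assume "PF j b \<in> ?H" "PR i a j \<in> ?H"
    with task[of "{PF j b, PR i a j}" "Expand_R2 i a j b"] show "\<exists>k. PR i b k \<in> ?H"
      by auto
  next
    fix i a j assume "PF i a \<in> ?H" "PF j (Neg a) \<in> ?H" "PR i Top j \<in> ?H"
    with rule[of "{PF i a, PF j (Neg a), PR i Top j}" "[[PF j a]]"] show "PF j a \<in> ?H"
      by (auto intro: vc_rule.r_R3)
  next
    fix i assume "i \<in> idx ?H"
    then obtain p where "p \<in> ?H" "i \<in> idx {p}"
      by (rule idx_singleton_witness)
    moreover have "vc_rule B [[PR i Top i]]" if "p \<in> B" for B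
      using idx_mono[of "{p}" B] that \<open>i \<in> idx {p}\<close> vc_rule.r_R4 by blast
    ultimately show "PR i Top i \<in> ?H"
      using rule[of "{p}" "[[PR i Top i]]"] by simp
  next
    fix j b i a assume "PF j b \<in> ?H" "PR i a j \<in> ?H"
    with rule[of "{PF j b, PR i a j}" "[[PR i (Conj a b) j]]"] show "PR i (Conj a b) j \<in> ?H"
      by (auto intro: vc_rule.r_R5)
  next
    fix j b i a k assume "PF j b \<in> ?H" "PR i a j \<in> ?H" "PR i (Conj a b) k \<in> ?H"
    with rule[of "{PF j b, PR i a j, PR i (Conj a b) k}" "[[PF k b, PR i a k]]"] show "PF k b \<in> ?H \<and> PR i a k \<in> ?H"
      by (auto intro: vc_rule.r_R6)
  qed
qed

lemma open_limit_contains_assumptions: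
  assumes "\<not> closes \<Gamma> \<phi> {}"
  shows "PF 1 (Neg \<phi>) \<in> open_limit \<Gamma> \<phi>"
    and "\<psi> \<in> \<Gamma> \<Longrightarrow> PF 1 \<psi> \<in> open_limit \<Gamma> \<phi>"
  using open_limit_runs_task[OF assms, of "{}" Assume_Neg_goal]
    open_limit_runs_task[OF assms, of "{}" "Assume \<psi>"]
  by auto

theorem mainTheorem10:
  fixes \<Gamma> :: "fm set" and \<phi> :: fm
  assumes "VC_conseq \<Gamma> \<phi>"
  shows "VC_derivable \<Gamma> \<phi>"
proof (rule ccontr)
  assume "\<not> VC_derivable \<Gamma> \<phi>"
  then have open_branch: "\<not> closes \<Gamma> \<phi> {}"
    by (simp add: VC_derivable_def)
  interpret vc_hintikka "open_limit \<Gamma> \<phi>"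
    using vc_hintikka_open_limit[OF open_branch] .
  have "1 \<in> idx (open_limit \<Gamma> \<phi>)"
    using open_limit_contains_assumptions(1)[OF open_branch] by blast
  then obtain x where "VC_model canonical_model" "x \<in> dom canonical_model"
    and sat: "\<And>c. holds 1 c \<Longrightarrow> sat canonical_model c x"
    using index_satisfiable by blast
  moreover have "\<forall>\<psi>\<in>\<Gamma>. sat canonical_model \<psi> x"
    using sat open_limit_contains_assumptions(2)[OF open_branch] by blast
  moreover have "\<not> sat canonical_model \<phi> x"
    using sat open_limit_contains_assumptions(1)[OF open_branch] by fastforce
  ultimately show False
    using assms unfolding VC_conseq_def by blast
qed

end
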